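(* Let $n\geq5$ and let $Z\in\mathbb{R}^{n\times4}$ be totally positive satisfying Assumption (G). For any $i,j\in[n]$ with $\{i-1,i,i+1\}\cap\{j,j+1\}=\emptyset$ (indices mod $n$), the line $P_{(i-1)i(i+1)}\cap L_{j(j+1)}\subset\mathrm{Gr}_{\mathbb{C}}(2,4)$, consisting of lines in $\mathbb{P}^3$ contained in the plane $Z_{i-1}Z_iZ_{i+1}$ and meeting the line $Z_jZ_{j+1}$, does not intersect $\mathcal{A}_n(Z)$.
   Context: $Z$ totally positive: all $4\times4$ minors positive; its rows $Z_1,\dots,Z_n$ are points of $\mathbb{P}^3$. $\mathcal{A}_n(Z)\subset\mathrm{Gr}_{\mathbb{R}}(2,4)$ is the image of the totally nonnegative Grassmannian $\mathrm{Gr}(2,n)_{\ge0}$ under $\mathrm{rowspan}(X)\mapsto\mathrm{rowspan}(XZ)$. $\langle AB\,ij\rangle$ is the determinant of the matrix with rows $A,B,Z_i,Z_j$. Assumption (G): no line $AB$ has more than $4$ of $\langle AB\,i(i+1)\rangle$, $i\in[n]$ (cyclically, $\langle AB\,n(n+1)\rangle=\langle AB\,1n\rangle$), vanishing. *)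

theory Defs
  imports "HOL-Analysis.Analysis"
begin

text \<open>Points of P^3 are represented by vectors in K^4. Indices of Z are 0-based: Z 0, ..., Z (n-1),
  taken cyclically mod n.\<close>

definition mat4 :: "'a::comm_ring_1^4 \<Rightarrow> 'a^4 \<Rightarrow> 'a^4 \<Rightarrow> 'a^4 \<Rightarrow> 'a^4^4" where
  "mat4 a b c d = (\<chi> k. if k = 1 then a else if k = 2 then b else if k = 3 then c else d)"

definition det4 :: "'a::comm_ring_1^4 \<Rightarrow> 'a^4 \<Rightarrow> 'a^4 \<Rightarrow> 'a^4 \<Rightarrow> 'a" where
  "det4 a b c d = det (mat4 a b c d)"

definition totally_positive :: "nat \<Rightarrow> (nat \<Rightarrow> real^4) \<Rightarrow> bool" where
  "totally_positive n Z \<longleftrightarrow>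
     (\<forall>i1 i2 i3 i4. i1 < i2 \<and> i2 < i3 \<and> i3 < i4 \<and> i4 < n \<longrightarrow> det4 (Z i1) (Z i2) (Z i3) (Z i4) > 0)"

definition cvec :: "real^4 \<Rightarrow> complex^4" where
  "cvec v = (\<chi> k. complex_of_real (v $ k))"

definition assumption_G :: "nat \<Rightarrow> (nat \<Rightarrow> real^4) \<Rightarrow> bool" where
  "assumption_G n Z \<longleftrightarrow>
     (\<forall>A B :: complex^4. (\<forall>a b. a *s A + b *s B = 0 \<longrightarrow> a = 0 \<and> b = 0) \<longrightarrow>
        card {i. i < n \<and> det4 A B (cvec (Z i)) (cvec (Z ((i + 1) mod n))) = 0} \<le> 4)"

text \<open>A 2 x n real matrix with rows x1, x2 (columns 0..n-1) representing a point of
  Gr(2,n)_{>=0}: rank 2 and all 2x2 minors nonnegative.\<close>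
definition tnn_Gr2 :: "nat \<Rightarrow> (nat \<Rightarrow> real) \<Rightarrow> (nat \<Rightarrow> real) \<Rightarrow> bool" where
  "tnn_Gr2 n x1 x2 \<longleftrightarrow>
     (\<forall>a b. a < b \<and> b < n \<longrightarrow> x1 a * x2 b - x1 b * x2 a \<ge> 0) \<and>
     (\<exists>a b. a < n \<and> b < n \<and> x1 a * x2 b - x1 b * x2 a \<noteq> 0)"

text \<open>The amplituhedron A_n(Z) as a set of 2-dimensional subspaces of R^4:
  the row spans of XZ for X in Gr(2,n)_{>=0}.\<close>
definition amplituhedron :: "nat \<Rightarrow> (nat \<Rightarrow> real^4) \<Rightarrow> (real^4) set set" where
  "amplituhedron n Z =
     {W. \<exists>x1 x2. tnn_Gr2 n x1 x2 \<and>
          W = span {(\<Sum>k<n. x1 k *\<^sub>R Z k), (\<Sum>k<n. x2 k *\<^sub>R Z k)} \<and> dim W = 2}"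

end

theory Submission
  imports Defs
begin

(* Write Y1, Y2 for the rows of XZ and <Y c d> for det4 Y1 Y2 (Z c) (Z d).
   Expanding both rows gives <Y c d> = sum over a < b of p_ab <a b c d>, with Plucker
   coordinates p_ab >= 0 of X.  By total positivity <a b c d> is nonzero when {a,b} and {c,d}
   are disjoint, and its sign only records whether the chords {a,b} and {c,d} of the n-gon
   cross.  Hence <Y c d> = 0 forces p_ab = 0 for every chord {a,b} disjoint from {c,d} as soon
   as all such chords with p_ab ~= 0 cross {c,d} in the same way.
   If the line Y lies in the plane Z_{i-1} Z_i Z_{i+1} and meets the line Z_j Z_{j+1}, then
   <Y (i-1) i>, <Y i (i+1)>, <Y (i-1) (i+1)> and <Y j (j+1)> vanish.  Edges of the n-gon cross
   no chord, so the first, second and fourth brackets leave only chords {i, j} and {i, j+1},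
   and these all cross {i-1, i+1}; the third bracket then kills them too, contradicting
   rank X = 2. *)

lemma det4_expand:
  "det4 a b c d =
     a$1 * b$2 * c$3 * d$4 - a$1 * b$2 * c$4 * d$3 - a$1 * b$3 * c$2 * d$4 + a$1 * b$3 * c$4 * d$2
   + a$1 * b$4 * c$2 * d$3 - a$1 * b$4 * c$3 * d$2 - a$2 * b$1 * c$3 * d$4 + a$2 * b$1 * c$4 * d$3
   + a$2 * b$3 * c$1 * d$4 - a$2 * b$3 * c$4 * d$1 - a$2 * b$4 * c$1 * d$3 + a$2 * b$4 * c$3 * d$1
   + a$3 * b$1 * c$2 * d$4 - a$3 * b$1 * c$4 * d$2 - a$3 * b$2 * c$1 * d$4 + a$3 * b$2 * c$4 * d$1
   + a$3 * b$4 * c$1 * d$2 - a$3 * b$4 * c$2 * d$1 - a$4 * b$1 * c$2 * d$3 + a$4 * b$1 * c$3 * d$2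
   + a$4 * b$2 * c$1 * d$3 - a$4 * b$2 * c$3 * d$1 - a$4 * b$3 * c$1 * d$2 + a$4 * b$3 * c$2 * d$1"
proof -
  have f1: "finite {2::4, 3, 4}" "1 \<notin> {2::4, 3, 4}" by auto
  have f2: "finite {3::4, 4}" "2 \<notin> {3::4, 4}" by auto
  have f3: "finite {4::4}" "3 \<notin> {4::4}" by auto
  show ?thesis
    unfolding det4_def det_def UNIV_4
    unfolding sum_over_permutations_insert[OF f1]
    unfolding sum_over_permutations_insert[OF f2]
    unfolding sum_over_permutations_insert[OF f3]
    unfolding permutes_sing
    by (simp add: mat4_def sign_swap_id permutation_swap_id sign_compose permutation_compose
        swap_id_eq algebra_simps)
qed

lemma det4_swap12: "det4 b a c d = - det4 a b c d"
  by (simp add: det4_expand algebra_simps)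

lemma det4_swap34: "det4 a b d c = - det4 a b c d"
  by (simp add: det4_expand algebra_simps)

lemma det4_repeated_row:
  "det4 a a c d = 0" "det4 a b a d = 0" "det4 a b c a = 0"
  "det4 a b b d = 0" "det4 a b c b = 0" "det4 a b c c = 0"
  by (simp_all add: det4_expand algebra_simps)

lemma det4_zero_left: "det4 0 b c d = 0"
  by (simp add: det4_expand)

lemma det4_add_left: "det4 (a + a') b c d = det4 a b c d + det4 a' b c d"
  by (simp add: det4_expand algebra_simps)

lemma det4_scale_left: "det4 (r *\<^sub>R a) b c d = r * det4 a b c d"
  for a b c d :: "real^4"
  by (simp add: det4_expand algebra_simps)

lemma det4_sum_left:
  fixes v :: "'i \<Rightarrow> real^4"
  assumes "finite K"
  shows "det4 (\<Sum>k\<in>K. f k *\<^sub>R v k) b c d = (\<Sum>k\<in>K. f k * det4 (v k) b c d)"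
  using assms
  by (induction K rule: finite_induct)
    (simp_all add: det4_zero_left det4_add_left det4_scale_left)

lemma det4_sum_second:
  fixes v :: "'i \<Rightarrow> real^4"
  assumes "finite K"
  shows "det4 a (\<Sum>k\<in>K. f k *\<^sub>R v k) c d = (\<Sum>k\<in>K. f k * det4 a (v k) c d)"
  using det4_sum_left[OF assms, of f v a c d]
  by (simp add: det4_swap12[of a] sum_negf)

lemma det4_independent_rows:
  fixes a b c d :: "real^4"
  assumes "det4 a b c d \<noteq> 0"
  shows "independent {a, b, c, d}" "card {a, b, c, d} = 4"
proof -
  have "rows (mat4 a b c d) = range (\<lambda>k. mat4 a b c d $ k)"
    by (auto simp: rows_def row_def vec_eq_iff)
  also have "\<dots> = {a, b, c, d}"
    unfolding UNIV_4 by (auto simp: mat4_def)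
  finally show "independent {a, b, c, d}"
    using det_dependent_rows[of "mat4 a b c d"] assms by (auto simp: det4_def dependent_vec_eq)
  have "a \<noteq> b" "a \<noteq> c" "a \<noteq> d" "b \<noteq> c" "b \<noteq> d" "c \<noteq> d"
    using assms by (auto simp: det4_repeated_row)
  then show "card {a, b, c, d} = 4" by simp
qed

lemma det4_eq_0_if_in_span3:
  fixes a b c d :: "real^4"
  assumes "{a, b, c, d} \<subseteq> span {p, q, r}"
  shows "det4 a b c d = 0"
proof (rule ccontr)
  assume "det4 a b c d \<noteq> 0"
  then have "4 \<le> card {p, q, r}"
    using independent_span_bound[of "{p, q, r}" "{a, b, c, d}"] assms det4_independent_rows
    by fastforce
  moreover have "card {p, q, r} \<le> 3"
    by (simp add: card_insert_if)
  ultimately show False by simp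
qed

lemma det4_eq_0_if_spans_meet:
  fixes a b c d :: "real^4"
  assumes "span {a, b} \<inter> span {c, d} \<noteq> {0}"
  shows "det4 a b c d = 0"
proof (rule ccontr)
  assume det: "det4 a b c d \<noteq> 0"
  obtain v where v: "v \<in> span {a, b}" "v \<in> span {c, d}" "v \<noteq> 0"
    using assms span_zero by blast
  obtain s t where st: "v = s *\<^sub>R a + t *\<^sub>R b"
    using v(1) by (auto simp: span_breakdown_eq span_singleton) (metis add.commute diff_add_cancel)
  obtain u w where uw: "v = u *\<^sub>R c + w *\<^sub>R d"
    using v(2) by (auto simp: span_breakdown_eq span_singleton) (metis add.commute diff_add_cancel)
  \<comment> \<open>Compute det4 v b c d and det4 a v c d once from each expression for v.\<close>
  have "s * det4 a b c d = 0"
    using arg_cong[OF st, of "\<lambda>v. det4 v b c d"] arg_cong[OF uw, of "\<lambda>v. det4 v b c d"]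
    by (simp add: det4_expand algebra_simps)
  moreover have "t * det4 a b c d = 0"
    using arg_cong[OF st, of "\<lambda>v. det4 a v c d"] arg_cong[OF uw, of "\<lambda>v. det4 a v c d"]
    by (simp add: det4_expand algebra_simps)
  ultimately show False
    using det st v(3) by simp
qed

definition lincomb :: "nat \<Rightarrow> (nat \<Rightarrow> real) \<Rightarrow> (nat \<Rightarrow> real^4) \<Rightarrow> real^4" where
  "lincomb n x Z = (\<Sum>k<n. x k *\<^sub>R Z k)"

definition plucker :: "(nat \<Rightarrow> real) \<Rightarrow> (nat \<Rightarrow> real) \<Rightarrow> nat \<Rightarrow> nat \<Rightarrow> real" where
  "plucker x1 x2 a b = x1 a * x2 b - x1 b * x2 a"

lemma sum_sum_antisym_eq_plucker:
  fixes g :: "nat \<Rightarrow> nat \<Rightarrow> real"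
  assumes antisym: "\<And>a b. g b a = - g a b"
  shows "(\<Sum>a<n. x1 a * (\<Sum>b<n. x2 b * g a b)) = (\<Sum>b<n. \<Sum>a<b. plucker x1 x2 a b * g a b)"
proof (induction n)
  case 0
  then show ?case by simp
next
  case (Suc n)
  have split: "(\<Sum>a<Suc n. x1 a * (\<Sum>b<Suc n. x2 b * g a b))
      = (\<Sum>a<n. x1 a * (\<Sum>b<n. x2 b * g a b)) + (\<Sum>a<n. x1 a * x2 n * g a n)
        + x1 n * (\<Sum>b<n. x2 b * g n b) + x1 n * x2 n * g n n"
    by (simp add: algebra_simps sum.distrib sum_distrib_left)
  have "x1 n * (\<Sum>b<n. x2 b * g n b) = - (\<Sum>a<n. x1 n * x2 a * g a n)"
    by (simp add: antisym[of _ n] sum_distrib_left sum_negf[symmetric] algebra_simps)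
  moreover have "g n n = 0"
    using antisym[of n n] by simp
  ultimately show ?case
    using split Suc.IH by (simp add: plucker_def algebra_simps sum_subtractf)
qed

lemma det4_lincomb_expand:
  "det4 (lincomb n x1 Z) (lincomb n x2 Z) c d =
     (\<Sum>b<n. \<Sum>a<b. plucker x1 x2 a b * det4 (Z a) (Z b) c d)"
proof -
  have "det4 (lincomb n x1 Z) (lincomb n x2 Z) c d =
      (\<Sum>a<n. x1 a * (\<Sum>b<n. x2 b * det4 (Z a) (Z b) c d))"
    unfolding lincomb_def det4_sum_left[OF finite_lessThan] by (simp add: det4_sum_second)
  also have "\<dots> = (\<Sum>b<n. \<Sum>a<b. plucker x1 x2 a b * det4 (Z a) (Z b) c d)"
    by (rule sum_sum_antisym_eq_plucker) (rule det4_swap12)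
  finally show ?thesis .
qed

lemma tnn_Gr2_plucker_nonneg:
  "tnn_Gr2 n x1 x2 \<Longrightarrow> a < b \<Longrightarrow> b < n \<Longrightarrow> plucker x1 x2 a b \<ge> 0"
  unfolding tnn_Gr2_def plucker_def by blast

lemma tnn_Gr2_plucker_nonzero:
  assumes "tnn_Gr2 n x1 x2"
  obtains a b where "a < b" "b < n" "plucker x1 x2 a b \<noteq> 0"
proof -
  obtain a b where ab: "a < n" "b < n" "plucker x1 x2 a b \<noteq> 0"
    using assms unfolding tnn_Gr2_def plucker_def by blast
  have "plucker x1 x2 b a = - plucker x1 x2 a b"
    unfolding plucker_def by simp
  then show thesis
  proof (cases a b rule: linorder_cases)
    case less
    then show ?thesis using that ab by blast
  next
    case equal
    then show ?thesis using ab unfolding plucker_def by simp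
  next
    case greater
    then show ?thesis using that[of b a] ab \<open>plucker x1 x2 b a = - plucker x1 x2 a b\<close> by simp
  qed
qed

(* For a < b: the chords {a, b} and {c, d} of the polygon with vertices 0, ..., n - 1 cross. *)
definition crossing :: "nat \<Rightarrow> nat \<Rightarrow> nat \<Rightarrow> nat \<Rightarrow> bool" where
  "crossing a b c d \<longleftrightarrow> (a < c \<and> c < b) \<noteq> (a < d \<and> d < b)"

lemma crossing_commute: "crossing a b d c = crossing a b c d"
  unfolding crossing_def by auto

lemma totally_positive_det4_sgn:
  assumes tp: "totally_positive n Z"
    and ab: "a < b" "b < n" and cd: "c < d" "d < n" and disj: "a \<notin> {c, d}" "b \<notin> {c, d}"
  shows "sgn (det4 (Z a) (Z b) (Z c) (Z d)) = (if crossing a b c d then -1 else 1)"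
proof -
  have pos: "det4 (Z p) (Z q) (Z r) (Z s) > 0" if "p < q" "q < r" "r < s" "s < n" for p q r s
    using tp that unfolding totally_positive_def by blast
  consider "b < c" | "d < a" | "a < c" "d < b" | "c < a" "b < d" | "a < c" "c < b" "b < d"
    | "c < a" "a < d" "d < b"
    using ab cd disj by fastforce
  then show ?thesis
  proof cases
    case 1
    then show ?thesis using pos[of a b c d] ab cd by (simp add: crossing_def)
  next
    case 2
    have "det4 (Z a) (Z b) (Z c) (Z d) = det4 (Z c) (Z d) (Z a) (Z b)"
      by (simp add: det4_expand algebra_simps)
    then show ?thesis using 2 pos[of c d a b] ab cd by (simp add: crossing_def)
  next
    case 3
    have "det4 (Z a) (Z b) (Z c) (Z d) = det4 (Z a) (Z c) (Z d) (Z b)"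
      by (simp add: det4_expand algebra_simps)
    then show ?thesis using 3 pos[of a c d b] ab cd by (simp add: crossing_def)
  next
    case 4
    have "det4 (Z a) (Z b) (Z c) (Z d) = det4 (Z c) (Z a) (Z b) (Z d)"
      by (simp add: det4_expand algebra_simps)
    then show ?thesis using 4 pos[of c a b d] ab cd by (simp add: crossing_def)
  next
    case 5
    have "det4 (Z a) (Z b) (Z c) (Z d) = - det4 (Z a) (Z c) (Z b) (Z d)"
      by (simp add: det4_expand algebra_simps)
    then show ?thesis using 5 pos[of a c b d] ab cd by (simp add: crossing_def)
  next
    case 6
    have "det4 (Z a) (Z b) (Z c) (Z d) = - det4 (Z c) (Z a) (Z d) (Z b)"
      by (simp add: det4_expand algebra_simps)
    then show ?thesis using 6 pos[of c a d b] ab cd by (simp add: crossing_def)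
  qed
qed

lemma totally_positive_det4_sgn_eq:
  assumes tp: "totally_positive n Z" and cd: "c \<noteq> d" "c < n" "d < n"
    and ab: "a < b" "b < n" "a \<notin> {c, d}" "b \<notin> {c, d}"
    and ab': "a' < b'" "b' < n" "a' \<notin> {c, d}" "b' \<notin> {c, d}"
    and same: "crossing a' b' c d = crossing a b c d"
  shows "sgn (det4 (Z a') (Z b') (Z c) (Z d)) = sgn (det4 (Z a) (Z b) (Z c) (Z d))"
proof (cases "c < d")
  case True
  then show ?thesis
    using totally_positive_det4_sgn[OF tp] ab ab' cd same by simp
next
  case False
  then have "d < c" using cd(1) by simp
  then show ?thesis
    using totally_positive_det4_sgn[OF tp, of _ _ d c] ab ab' cd same
    by (simp add: det4_swap34[of _ _ "Z c"] crossing_commute[of _ _ c] insert_commute)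
qed

lemma totally_positive_det4_neq_0:
  assumes tp: "totally_positive n Z" and cd: "c \<noteq> d" "c < n" "d < n"
    and ab: "a < b" "b < n" "a \<notin> {c, d}" "b \<notin> {c, d}"
  shows "det4 (Z a) (Z b) (Z c) (Z d) \<noteq> 0"
proof (cases "c < d")
  case True
  then have "sgn (det4 (Z a) (Z b) (Z c) (Z d)) \<noteq> 0"
    using totally_positive_det4_sgn[OF tp ab(1,2) True cd(3) ab(3,4)] by simp
  then show ?thesis by (metis sgn_0)
next
  case False
  then have "d < c" using cd(1) by simp
  then have "sgn (det4 (Z a) (Z b) (Z d) (Z c)) \<noteq> 0"
    using totally_positive_det4_sgn[OF tp ab(1,2) _ cd(2)] ab(3,4) by (simp add: insert_commute)
  then show ?thesis
    using det4_swap34[of "Z a" "Z b" "Z c" "Z d"] by (metis sgn_0 neg_0_equal_iff_equal)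
qed

lemma sum_triangle_nonneg_eq_0:
  fixes f :: "nat \<Rightarrow> nat \<Rightarrow> real"
  assumes "\<And>a b. a < b \<Longrightarrow> b < n \<Longrightarrow> f a b \<ge> 0" and "(\<Sum>b<n. \<Sum>a<b. f a b) = 0"
    and "a < b" "b < n"
  shows "f a b = 0"
proof -
  have "\<forall>b\<in>{..<n}. (\<Sum>a<b. f a b) \<ge> 0"
    using assms(1) by (auto intro: sum_nonneg)
  then have "(\<Sum>a<b. f a b) = 0"
    using sum_nonneg_eq_0_iff[of "{..<n}" "\<lambda>b. \<Sum>a<b. f a b"] assms(2,4) by simp
  then show ?thesis
    using sum_nonneg_eq_0_iff[of "{..<b}" "\<lambda>a. f a b"] assms(1,3,4) by simp
qed

lemma plucker_eq_0_of_bracket_eq_0: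
  fixes Z :: "nat \<Rightarrow> real^4"
  assumes tp: "totally_positive n Z" and tnn: "tnn_Gr2 n x1 x2"
    and cd: "c \<noteq> d" "c < n" "d < n"
    and bracket: "det4 (lincomb n x1 Z) (lincomb n x2 Z) (Z c) (Z d) = 0"
    and ab: "a < b" "b < n" "a \<notin> {c, d}" "b \<notin> {c, d}"
    and coherent: "\<And>a' b'. a' < b' \<Longrightarrow> b' < n \<Longrightarrow> a' \<notin> {c, d} \<Longrightarrow> b' \<notin> {c, d} \<Longrightarrow>
      plucker x1 x2 a' b' \<noteq> 0 \<Longrightarrow> crossing a' b' c d = crossing a b c d"
  shows "plucker x1 x2 a b = 0"
proof -
  define s where "s = sgn (det4 (Z a) (Z b) (Z c) (Z d))"
  define t where "t a' b' = s * (plucker x1 x2 a' b' * det4 (Z a') (Z b') (Z c) (Z d))" for a' b'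
  have det_ne: "det4 (Z a) (Z b) (Z c) (Z d) \<noteq> 0"
    using totally_positive_det4_neq_0[OF tp cd ab] .
  then have s: "s \<noteq> 0"
    unfolding s_def by (simp add: sgn_if)
  have t_nonneg: "t a' b' \<ge> 0" if ab': "a' < b'" "b' < n" for a' b'
  proof (cases "a' \<in> {c, d} \<or> b' \<in> {c, d} \<or> plucker x1 x2 a' b' = 0")
    case True
    then have "plucker x1 x2 a' b' * det4 (Z a') (Z b') (Z c) (Z d) = 0"
      by (elim disjE) (auto simp: det4_repeated_row)
    then show ?thesis
      unfolding t_def by (simp only: mult_zero_right order_refl)
  next
    case False
    then have disj': "a' \<notin> {c, d}" "b' \<notin> {c, d}" and p: "plucker x1 x2 a' b' \<noteq> 0"
      by auto
    have "sgn (det4 (Z a') (Z b') (Z c) (Z d)) = s"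
      using totally_positive_det4_sgn_eq[OF tp cd ab ab' disj' coherent[OF ab' disj' p]]
      unfolding s_def .
    then have "t a' b' = plucker x1 x2 a' b' * \<bar>det4 (Z a') (Z b') (Z c) (Z d)\<bar>"
      unfolding t_def abs_sgn by (simp add: ac_simps)
    then show ?thesis
      using tnn_Gr2_plucker_nonneg[OF tnn ab'] by simp
  qed
  have "(\<Sum>b<n. \<Sum>a<b. t a b) = s * det4 (lincomb n x1 Z) (lincomb n x2 Z) (Z c) (Z d)"
    unfolding t_def det4_lincomb_expand by (simp add: sum_distrib_left)
  then have "(\<Sum>b<n. \<Sum>a<b. t a b) = 0"
    using bracket by simp
  then have "t a b = 0"
    using sum_triangle_nonneg_eq_0[of n t, OF t_nonneg] ab by blast
  then show ?thesis
    using s det_ne unfolding t_def by auto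
qed

lemma prev_mod_eq:
  fixes i n :: nat
  assumes "i < n"
  shows "(i + n - 1) mod n = (if i = 0 then n - 1 else i - 1)"
  using assms by (cases i) auto

lemma next_mod_eq:
  fixes i n :: nat
  assumes "i < n"
  shows "(i + 1) mod n = (if i + 1 = n then 0 else i + 1)"
  using assms by auto

lemma next_mod_prev:
  fixes i n :: nat
  assumes "i < n"
  shows "((i + n - 1) mod n + 1) mod n = i"
  using assms by (cases i) (auto simp: mod_Suc)

lemma prev_mod_neq_next:
  fixes i n :: nat
  assumes "3 \<le> n" "i < n"
  shows "(i + n - 1) mod n \<noteq> (i + 1) mod n"
  using assms by (cases i) (auto simp: mod_Suc)

lemma not_crossing_adjacent:
  assumes "c < n" "a < b" "b < n" "a \<notin> {c, (c + 1) mod n}" "b \<notin> {c, (c + 1) mod n}"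
  shows "\<not> crossing a b c ((c + 1) mod n)"
  using assms next_mod_eq[OF assms(1)] by (auto simp: crossing_def split: if_splits)

lemma crossing_neighbours:
  assumes "i < n" "k < n" "k \<notin> {(i + n - 1) mod n, i, (i + 1) mod n}"
    and "{a, b} = {i, k}" "a < b"
  shows "crossing a b ((i + n - 1) mod n) ((i + 1) mod n)"
  using assms prev_mod_eq[OF assms(1)] next_mod_eq[OF assms(1)]
  by (auto simp: crossing_def doubleton_eq_iff split: if_splits)

lemma plucker_eq_0_of_adjacent_bracket_eq_0:
  fixes Z :: "nat \<Rightarrow> real^4"
  assumes tp: "totally_positive n Z" and tnn: "tnn_Gr2 n x1 x2" and n: "2 \<le> n"
    and c: "c < n" and d: "d = (c + 1) mod n"
    and bracket: "det4 (lincomb n x1 Z) (lincomb n x2 Z) (Z c) (Z d) = 0"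
    and ab: "a < b" "b < n" "a \<notin> {c, d}" "b \<notin> {c, d}"
  shows "plucker x1 x2 a b = 0"
proof (rule plucker_eq_0_of_bracket_eq_0[OF tp tnn _ c _ bracket ab])
  show "c \<noteq> d"
    using c n unfolding d by (auto simp: mod_Suc)
  show "crossing a' b' c d = crossing a b c d"
    if "a' < b'" "b' < n" "a' \<notin> {c, d}" "b' \<notin> {c, d}" for a' b'
    using not_crossing_adjacent[OF c that[unfolded d]] not_crossing_adjacent[OF c ab[unfolded d]]
    unfolding d by simp
qed (use c in \<open>simp add: d\<close>)

lemma plucker_nonzero_chord_crosses:
  fixes Z :: "nat \<Rightarrow> real^4"
  assumes tp: "totally_positive n Z" and tnn: "tnn_Gr2 n x1 x2" and n: "3 \<le> n"
    and i: "i < n" and j: "j < n"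
    and p: "p = (i + n - 1) mod n" and q: "q = (i + 1) mod n" and j': "j' = (j + 1) mod n"
    and off_triangle: "j \<notin> {p, i, q}" "j' \<notin> {p, i, q}"
    and bracket_p_i: "det4 (lincomb n x1 Z) (lincomb n x2 Z) (Z p) (Z i) = 0"
    and bracket_i_q: "det4 (lincomb n x1 Z) (lincomb n x2 Z) (Z i) (Z q) = 0"
    and bracket_j_j': "det4 (lincomb n x1 Z) (lincomb n x2 Z) (Z j) (Z j') = 0"
    and ab: "a < b" "b < n" "plucker x1 x2 a b \<noteq> 0"
  shows "a \<notin> {p, q} \<and> b \<notin> {p, q} \<and> crossing a b p q"
proof -
  have n2: "2 \<le> n" and i_eq: "i = (p + 1) mod n" and "p < n"
    using next_mod_prev[OF i] n unfolding p by auto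
  have "a \<in> {p, i} \<or> b \<in> {p, i}"
    using plucker_eq_0_of_adjacent_bracket_eq_0[OF tp tnn n2 \<open>p < n\<close> i_eq bracket_p_i ab(1,2)]
      ab(3) by blast
  moreover have "a \<in> {i, q} \<or> b \<in> {i, q}"
    using plucker_eq_0_of_adjacent_bracket_eq_0[OF tp tnn n2 i q bracket_i_q ab(1,2)] ab(3) by blast
  moreover have "a \<in> {j, j'} \<or> b \<in> {j, j'}"
    using plucker_eq_0_of_adjacent_bracket_eq_0[OF tp tnn n2 j j' bracket_j_j' ab(1,2)] ab(3) by blast
  moreover have "p \<noteq> q"
    using prev_mod_neq_next[OF n i] unfolding p q .
  ultimately obtain k where k: "k \<in> {j, j'}" "{a, b} = {i, k}"
    using off_triangle by auto
  have "k < n" "k \<notin> {p, i, q}"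
    using k(1) j off_triangle unfolding j' by auto
  moreover have "i \<notin> {p, q}"
    using i_eq \<open>p < n\<close> n2 unfolding q by (auto simp: mod_Suc)
  ultimately show ?thesis
    using crossing_neighbours[OF i \<open>k < n\<close> _ k(2) ab(1)] k(2) unfolding p q
    by (auto simp: doubleton_eq_iff)
qed

lemma plucker_eq_0_of_four_brackets_eq_0:
  fixes Z :: "nat \<Rightarrow> real^4"
  assumes tp: "totally_positive n Z" and tnn: "tnn_Gr2 n x1 x2" and n: "3 \<le> n"
    and i: "i < n" and j: "j < n"
    and p: "p = (i + n - 1) mod n" and q: "q = (i + 1) mod n" and j': "j' = (j + 1) mod n"
    and off_triangle: "j \<notin> {p, i, q}" "j' \<notin> {p, i, q}"
    and bracket_p_i: "det4 (lincomb n x1 Z) (lincomb n x2 Z) (Z p) (Z i) = 0"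
    and bracket_i_q: "det4 (lincomb n x1 Z) (lincomb n x2 Z) (Z i) (Z q) = 0"
    and bracket_p_q: "det4 (lincomb n x1 Z) (lincomb n x2 Z) (Z p) (Z q) = 0"
    and bracket_j_j': "det4 (lincomb n x1 Z) (lincomb n x2 Z) (Z j) (Z j') = 0"
    and ab: "a < b" "b < n"
  shows "plucker x1 x2 a b = 0"
proof (rule ccontr)
  note crosses = plucker_nonzero_chord_crosses[OF tp tnn n i j p q j' off_triangle
      bracket_p_i bracket_i_q bracket_j_j']
  assume nonzero: "plucker x1 x2 a b \<noteq> 0"
  have "p \<noteq> q" "p < n" "q < n"
    using prev_mod_neq_next[OF n i] i unfolding p q by auto
  moreover have "a \<notin> {p, q}" "b \<notin> {p, q}"
    using crosses[OF ab nonzero] by auto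
  moreover have "crossing a' b' p q = crossing a b p q"
    if "a' < b'" "b' < n" "plucker x1 x2 a' b' \<noteq> 0" for a' b'
    using crosses[OF ab nonzero] crosses[OF that] by simp
  ultimately have "plucker x1 x2 a b = 0"
    using plucker_eq_0_of_bracket_eq_0[OF tp tnn _ _ _ bracket_p_q ab] by blast
  with nonzero show False ..
qed

theorem lemma4p5:
  fixes n :: nat and Z :: "nat \<Rightarrow> real^4" and i j :: nat
  assumes "n \<ge> 5"
    and "totally_positive n Z"
    and "assumption_G n Z"
    and "i < n" and "j < n"
    and "j \<notin> {(i + n - 1) mod n, i, (i + 1) mod n}"
    and "(j + 1) mod n \<notin> {(i + n - 1) mod n, i, (i + 1) mod n}"
  shows "\<not> (\<exists>W \<in> amplituhedron n Z.
            W \<subseteq> span {Z ((i + n - 1) mod n), Z i, Z ((i + 1) mod n)} \<and>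
            W \<inter> span {Z j, Z ((j + 1) mod n)} \<noteq> {0})"
proof
  define p q j' where "p = (i + n - 1) mod n" and "q = (i + 1) mod n" and "j' = (j + 1) mod n"
  assume "\<exists>W \<in> amplituhedron n Z. W \<subseteq> span {Z p, Z i, Z q} \<and> W \<inter> span {Z j, Z j'} \<noteq> {0}"
  then obtain x1 x2 where tnn: "tnn_Gr2 n x1 x2"
    and plane: "span {lincomb n x1 Z, lincomb n x2 Z} \<subseteq> span {Z p, Z i, Z q}"
    and line: "span {lincomb n x1 Z, lincomb n x2 Z} \<inter> span {Z j, Z j'} \<noteq> {0}"
    unfolding amplituhedron_def lincomb_def by blast
  have in_plane: "{lincomb n x1 Z, lincomb n x2 Z, Z p, Z i, Z q} \<subseteq> span {Z p, Z i, Z q}"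
    using plane by (auto intro: span_base)
  obtain a b where ab: "a < b" "b < n" "plucker x1 x2 a b \<noteq> 0"
    using tnn_Gr2_plucker_nonzero[OF tnn] .
  have "plucker x1 x2 a b = 0"
  proof (rule plucker_eq_0_of_four_brackets_eq_0[OF assms(2) tnn _ assms(4,5) p_def q_def j'_def
        assms(6,7)[folded p_def q_def j'_def] _ _ _ det4_eq_0_if_spans_meet[OF line] ab(1,2)])
    show "3 \<le> n"
      using assms(1) by simp
  qed (rule det4_eq_0_if_in_span3; use in_plane in blast)+
  with ab(3) show False ..
qed

end
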